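(* Under the standing assumptions, let $u\in X\setminus\{0\}$ and $\zeta\in X^*\setminus\{0\}$ with $\zeta\in\partial J(u)$. Then $g(u,\zeta)=0$ if and only if $u$ is a $p$-eigenvector of $J$ with subgradient $\zeta$ (and eigenvalue $\lambda=R(u)$).
   Context: Standing assumptions: $X$ is a real reflexive Banach space with dual $X^*$ and duality pairing $\langle\cdot,\cdot\rangle$; $\Gamma_0(X)$ is the class of proper, lower semi-continuous, convex functionals $X\to\mathbb{R}\cup\{+\infty\}$. Fix $1<p<\infty$ and $q=\frac{p}{p-1}$. Let $J\in\Gamma_0(X)$, and let $H\in\Gamma_0(X)$ be absolutely $p$-homogeneous ($H(tu)=|t|^pH(u)$) such that $|u|_H:=(pH(u))^{1/p}$ is a norm on $X$, so $H(u)=\frac1p|u|_H^p$. The dual norm is $|\zeta|_{H^*}=\sup_{u\ne0}\langle\zeta,u\rangle/|u|_H$, and $H^*(\zeta)=\frac1q|\zeta|_{H^*}^q$. The Fenchel conjugate is $J^*(\zeta)=\sup_{u\in X}\langle\zeta,u\rangle-J(u)$ and the subdifferential is $\partial J(u)=\{\zeta\in X^*:\ J(u)+\langle\zeta,v-u\rangle\le J(v)\ \forall v\in X\}$. Growth assumption: there is $c>0$ with $H(u)\le cJ(u)$ for all $u\in X$. The Rayleigh quotient is $R(u)=J(u)/H(u)$ for $u\ne0$ and the dual Rayleigh quotient is $R_*(\zeta)=J^*(\zeta)/H^*(\zeta)$ for $\zeta\ne0$. The duality gap is $g(u,\zeta)=R(u)^{-1/p}-\operatorname{sign}(J^*(\zeta))\,|R_*(\zeta)|^{1/q}$.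 A $p$-eigenvector of $J$: $u\in X\setminus\{0\}$ with subgradient $\zeta\in\partial J(u)$ and eigenvalue $\lambda=R(u)\in\mathbb{R}$ such that $\zeta\in\lambda\,\partial H(u)$. *)

theory Defs
  imports "HOL-Analysis.Analysis"
begin

definition reflexive_space :: "'a::banach itself \<Rightarrow> bool" where
  "reflexive_space T \<longleftrightarrow>
     (\<forall>\<phi> :: ('a \<Rightarrow>\<^sub>L real) \<Rightarrow>\<^sub>L real. \<exists>x::'a. \<forall>\<zeta>. blinfun_apply \<phi> \<zeta> = blinfun_apply \<zeta> x)"

text \<open>Functionals with values in R union {+infinity} are modelled as ereal-valued
  functions that never take the value -infinity.\<close>
definition proper_fun :: "('a \<Rightarrow> ereal) \<Rightarrow> bool" where
  "proper_fun f \<longleftrightarrow> (\<forall>x. f x \<noteq> -\<infinity>) \<and> (\<exists>x. f x \<noteq> \<infinity>)"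

definition lsc_fun :: "('a::topological_space \<Rightarrow> ereal) \<Rightarrow> bool" where
  "lsc_fun f \<longleftrightarrow> (\<forall>t. closed {x. f x \<le> t})"

definition convex_fun :: "('a::real_vector \<Rightarrow> ereal) \<Rightarrow> bool" where
  "convex_fun f \<longleftrightarrow> (\<forall>x y t. 0 < t \<and> t < 1 \<longrightarrow>
      f (t *\<^sub>R x + (1 - t) *\<^sub>R y) \<le> ereal t * f x + ereal (1 - t) * f y)"

definition Gamma0 :: "('a::real_normed_vector \<Rightarrow> ereal) \<Rightarrow> bool" where
  "Gamma0 f \<longleftrightarrow> proper_fun f \<and> lsc_fun f \<and> convex_fun f"

definition is_norm_fun :: "('a::real_vector \<Rightarrow> real) \<Rightarrow> bool" where
  "is_norm_fun N \<longleftrightarrow> (\<forall>u. 0 \<le> N u) \<and> (\<forall>u. N u = 0 \<longleftrightarrow> u = 0)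
     \<and> (\<forall>t u. N (t *\<^sub>R u) = \<bar>t\<bar> * N u) \<and> (\<forall>u v. N (u + v) \<le> N u + N v)"

definition fconj :: "('a::real_normed_vector \<Rightarrow> ereal) \<Rightarrow> ('a \<Rightarrow>\<^sub>L real) \<Rightarrow> ereal" where
  "fconj f \<zeta> = (SUP u. ereal (blinfun_apply \<zeta> u) - f u)"

definition subdiff :: "('a::real_normed_vector \<Rightarrow> ereal) \<Rightarrow> 'a \<Rightarrow> ('a \<Rightarrow>\<^sub>L real) set" where
  "subdiff f u = {\<zeta>. \<forall>v. f u + ereal (blinfun_apply \<zeta> (v - u)) \<le> f v}"

text \<open>Rayleigh quotient R(u) = J(u)/H(u) (as a real number; it is +infinity only if J(u)
  is, in which case the real value 0 is used, which gives R(u)^(-1/p) = 0 consistently).\<close>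
definition rayleigh :: "('a \<Rightarrow> ereal) \<Rightarrow> ('a \<Rightarrow> real) \<Rightarrow> 'a \<Rightarrow> real" where
  "rayleigh J H u = real_of_ereal (J u / ereal (H u))"

definition dual_rayleigh ::
  "('a::real_normed_vector \<Rightarrow> ereal) \<Rightarrow> ('a \<Rightarrow> real) \<Rightarrow> ('a \<Rightarrow>\<^sub>L real) \<Rightarrow> real" where
  "dual_rayleigh J H \<zeta> = real_of_ereal (fconj J \<zeta> / fconj (\<lambda>u. ereal (H u)) \<zeta>)"

text \<open>Duality gap g(u,zeta), with q = p/(p-1).\<close>
definition duality_gap ::
  "real \<Rightarrow> ('a::real_normed_vector \<Rightarrow> ereal) \<Rightarrow> ('a \<Rightarrow> real) \<Rightarrow> 'a \<Rightarrow> ('a \<Rightarrow>\<^sub>L real) \<Rightarrow> real" where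
  "duality_gap p J H u \<zeta> =
     rayleigh J H u powr (-1 / p)
     - sgn (real_of_ereal (fconj J \<zeta>)) * \<bar>dual_rayleigh J H \<zeta>\<bar> powr (1 / (p / (p - 1)))"

definition p_eigenvector ::
  "('a::real_normed_vector \<Rightarrow> ereal) \<Rightarrow> ('a \<Rightarrow> real) \<Rightarrow> 'a \<Rightarrow> ('a \<Rightarrow>\<^sub>L real) \<Rightarrow> real \<Rightarrow> bool" where
  "p_eigenvector J H u \<zeta> lam \<longleftrightarrow> u \<noteq> 0 \<and> \<zeta> \<in> subdiff J u \<and> lam = rayleigh J H u
     \<and> \<zeta> \<in> (\<lambda>\<eta>. lam *\<^sub>R \<eta>) ` subdiff (\<lambda>v. ereal (H v)) u"

end

theory Submission
  imports Defs
begin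

text \<open>Since \<open>\<zeta> \<in> \<partial>J(u)\<close>, Fenchel-Young holds with equality:
  \<open>J\<^sup>*(\<zeta>) = \<langle>\<zeta>,u\<rangle> - J(u)\<close>. Put \<open>\<lambda> = R(u)\<close> and \<open>s = \<lambda>\<^bsup>1/(p-1)\<^esup>\<close>;
  the substitution \<open>v = s w\<close> in the supremum defining \<open>H\<^sup>*\<close> gives
  \<open>H\<^sup>*(\<zeta>) = s (\<lambda>H)\<^sup>*(\<zeta>)\<close>, where
  \<open>(\<lambda>H)\<^sup>*(\<zeta>) \<ge> \<langle>\<zeta>,u\<rangle> - \<lambda>H(u) = J\<^sup>*(\<zeta>)\<close> with equality iff
  \<open>\<zeta> \<in> \<partial>(\<lambda>H)(u) = \<lambda>\<partial>H(u)\<close>. Inserting this into the gap, \<open>g(u,\<zeta>) = 0\<close> says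
  exactly that \<open>J\<^sup>*(\<zeta>) > 0\<close> and equality holds; positivity is automatic for eigenvectors
  by Euler's identity \<open>\<langle>\<eta>,u\<rangle> = p H(u)\<close> for \<open>\<eta> \<in> \<partial>H(u)\<close>.\<close>

lemma fenchel_young: "ereal (blinfun_apply \<zeta> u) - f u \<le> fconj f \<zeta>"
  unfolding fconj_def by (rule SUP_upper) simp

lemma subdiff_iff_fconj_eq:
  assumes "f u = ereal a"
  shows "\<zeta> \<in> subdiff f u \<longleftrightarrow> fconj f \<zeta> = ereal (blinfun_apply \<zeta> u - a)"
proof -
  have pointwise: "f u + ereal (blinfun_apply \<zeta> (v - u)) \<le> f v \<longleftrightarrow>
      ereal (blinfun_apply \<zeta> v) - f v \<le> ereal (blinfun_apply \<zeta> u - a)" for v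
    using assms by (cases "f v") (auto simp: blinfun.diff_right)
  have "fconj f \<zeta> = ereal (blinfun_apply \<zeta> u - a) \<longleftrightarrow>
      fconj f \<zeta> \<le> ereal (blinfun_apply \<zeta> u - a)"
    using fenchel_young[of \<zeta> u f] assms by auto
  also have "\<dots> \<longleftrightarrow> (\<forall>v. ereal (blinfun_apply \<zeta> v) - f v \<le> ereal (blinfun_apply \<zeta> u - a))"
    unfolding fconj_def by (simp add: SUP_le_iff)
  finally show ?thesis
    unfolding subdiff_def using pointwise by auto
qed

lemma subdiff_imp_finite:
  assumes "proper_fun f" and "\<zeta> \<in> subdiff f u"
  obtains a where "f u = ereal a"
proof -
  obtain w where "f w \<noteq> \<infinity>" and "f u \<noteq> -\<infinity>"
    using assms(1) unfolding proper_fun_def by blast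
  moreover have "f u + ereal (blinfun_apply \<zeta> (w - u)) \<le> f w"
    using assms(2) unfolding subdiff_def by blast
  ultimately show ?thesis
    using that by (cases "f u") auto
qed

lemma norm_fun_powr_pos:
  assumes "is_norm_fun (\<lambda>v. (p * H v) powr (1 / p))" and "\<forall>v. 0 \<le> H v" and "u \<noteq> 0"
  shows "0 < H u"
proof -
  have "(p * H u) powr (1 / p) \<noteq> 0"
    using assms(1,3) unfolding is_norm_fun_def by blast
  then show ?thesis
    using assms(2)[rule_format, of u] by fastforce
qed

lemma subdiff_scaleR:
  fixes H :: "'a::real_normed_vector \<Rightarrow> real"
  assumes c: "0 < c"
  shows "subdiff (\<lambda>v. ereal (c * H v)) u = (\<lambda>\<eta>. c *\<^sub>R \<eta>) ` subdiff (\<lambda>v. ereal (H v)) u"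
proof -
  have scaled: "c *\<^sub>R \<eta> \<in> subdiff (\<lambda>v. ereal (c * H v)) u \<longleftrightarrow> \<eta> \<in> subdiff (\<lambda>v. ereal (H v)) u"
    for \<eta> :: "'a \<Rightarrow>\<^sub>L real"
  proof -
    have "c * H u + c * blinfun_apply \<eta> (v - u) \<le> c * H v \<longleftrightarrow>
        H u + blinfun_apply \<eta> (v - u) \<le> H v" for v
      using c by (simp flip: distrib_left)
    then show ?thesis
      unfolding subdiff_def by (simp add: blinfun.scaleR_left)
  qed
  have "\<zeta> = c *\<^sub>R ((1 / c) *\<^sub>R \<zeta>)" for \<zeta> :: "'a \<Rightarrow>\<^sub>L real"
    using c by simp
  then show ?thesis
    using scaled by (metis (no_types, lifting) image_iff subsetI subset_antisym)
qed

lemma subdiff_homogeneous_Euler: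
  fixes H :: "'a::real_normed_vector \<Rightarrow> real"
  assumes p: "1 < p"
    and H_hom: "\<forall>t v. H (t *\<^sub>R v) = \<bar>t\<bar> powr p * H v"
    and \<eta>: "\<eta> \<in> subdiff (\<lambda>v. ereal (H v)) u"
  shows "blinfun_apply \<eta> u = p * H u"
proof -
  define f where "f t = t powr p * H u - H u - (t - 1) * blinfun_apply \<eta> u" for t
  have deriv: "(f has_real_derivative (p * 1 powr (p - 1) * H u - blinfun_apply \<eta> u)) (at 1)"
    unfolding f_def by (auto intro!: derivative_eq_intros)
  have "\<forall>t. \<bar>1 - t\<bar> < 1 / 2 \<longrightarrow> f 1 \<le> f t"
  proof (intro allI impI)
    fix t :: real
    assume "\<bar>1 - t\<bar> < 1 / 2"
    then have "0 < t" by linarith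
    have "H u + blinfun_apply \<eta> (t *\<^sub>R u - u) \<le> H (t *\<^sub>R u)"
      using \<eta> unfolding subdiff_def by simp
    also have "\<dots> = t powr p * H u"
      using H_hom \<open>0 < t\<close> by simp
    finally show "f 1 \<le> f t"
      unfolding f_def by (simp add: blinfun.diff_right blinfun.scaleR_right algebra_simps)
  qed
  from DERIV_local_min[OF deriv _ this] show ?thesis
    by simp
qed

lemma fconj_homogeneous_rescale:
  fixes H :: "'a::real_normed_vector \<Rightarrow> real"
  assumes H_hom: "\<forall>t v. H (t *\<^sub>R v) = \<bar>t\<bar> powr p * H v" and s: "0 < s"
  shows "fconj (\<lambda>v. ereal (H v)) \<zeta> = ereal s * fconj (\<lambda>v. ereal (s powr (p - 1) * H v)) \<zeta>"
proof -
  have "range (\<lambda>w :: 'a. s *\<^sub>R w) = UNIV"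
    by (rule surjI[where f = "\<lambda>v. (1 / s) *\<^sub>R v"]) (use s in simp)
  then have "fconj (\<lambda>v. ereal (H v)) \<zeta> =
      (SUP v \<in> range (\<lambda>w. s *\<^sub>R w). ereal (blinfun_apply \<zeta> v) - ereal (H v))"
    unfolding fconj_def by simp
  also have "\<dots> = (SUP w. ereal (blinfun_apply \<zeta> (s *\<^sub>R w)) - ereal (H (s *\<^sub>R w)))"
    by (simp only: image_image)
  also have "\<dots> = (SUP w. ereal s * (ereal (blinfun_apply \<zeta> w) - ereal (s powr (p - 1) * H w)))"
  proof -
    have "s powr p = s * s powr (p - 1)"
      using powr_mult_base[of s "p - 1"] s by simp
    then show ?thesis
      using H_hom s by (simp add: blinfun.scaleR_right algebra_simps)
  qed
  also have "\<dots> = ereal s * fconj (\<lambda>v. ereal (s powr (p - 1) * H v)) \<zeta>"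
    unfolding fconj_def using s by (simp add: Sup_ereal_mult_left')
  finally show ?thesis .
qed

lemma gap_formula_eq_zero_iff:
  fixes lam p A :: real and K :: ereal
  assumes p: "1 < p" and lam: "0 < lam" and K: "ereal A \<le> K"
  shows "lam powr (-1 / p) - sgn A
      * \<bar>real_of_ereal (ereal A / (ereal (lam powr (1 / (p - 1))) * K))\<bar> powr (1 / (p / (p - 1))) = 0
    \<longleftrightarrow> 0 < A \<and> K = ereal A"
proof -
  define s where "s = lam powr (1 / (p - 1))"
  define e where "e = (p - 1) / p"
  define r where "r = real_of_ereal (ereal A / (ereal s * K))"
  have s: "0 < s" and e: "0 < e"
    using p lam by (simp_all add: s_def e_def)
  have expo: "1 / (p / (p - 1)) = e"
    using p by (simp add: e_def)
  have "1 / s = lam powr (-1 / (p - 1))"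
    by (simp add: s_def powr_minus_divide)
  then have root: "(1 / s) powr e = lam powr (-1 / p)"
    using p lam by (simp add: e_def powr_powr)
  have "lam powr (-1 / p) - sgn A * \<bar>r\<bar> powr e = 0 \<longleftrightarrow> 0 < A \<and> K = ereal A"
  proof
    assume "lam powr (-1 / p) - sgn A * \<bar>r\<bar> powr e = 0"
    then have gap0: "sgn A * \<bar>r\<bar> powr e = (1 / s) powr e"
      using root by simp
    have A: "0 < A"
    proof (rule ccontr)
      assume "\<not> 0 < A"
      then have "sgn A * \<bar>r\<bar> powr e \<le> 0"
        by (simp add: mult_nonpos_nonneg sgn_real_def)
      with gap0 s show False
        by simp
    qed
    with gap0 have "(\<bar>r\<bar> powr e) powr (1 / e) = ((1 / s) powr e) powr (1 / e)"
      by simp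
    then have r: "\<bar>r\<bar> = 1 / s"
      using e s by (simp add: powr_powr)
    show "0 < A \<and> K = ereal A"
    proof (cases K)
      case (real k)
      with K A have "0 < k" by simp
      with r s A have "A / (s * k) = 1 / s"
        by (simp add: r_def real abs_of_pos)
      with s \<open>0 < k\<close> show ?thesis
        using A real by (simp add: field_simps)
    qed (use K r s in \<open>auto simp: r_def\<close>)
  next
    assume "0 < A \<and> K = ereal A"
    then have "r = 1 / s"
      using s by (simp add: r_def)
    then show "lam powr (-1 / p) - sgn A * \<bar>r\<bar> powr e = 0"
      using root s \<open>0 < A \<and> K = ereal A\<close> by simp
  qed
  then show ?thesis
    unfolding expo s_def[symmetric] r_def[symmetric] .
qed

lemma duality_gap_eq_zero_iff_subdiff:
  fixes J :: "'a::real_normed_vector \<Rightarrow> ereal" and H :: "'a \<Rightarrow> real"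
  assumes p: "1 < p"
    and H_hom: "\<forall>t v. H (t *\<^sub>R v) = \<bar>t\<bar> powr p * H v"
    and lam: "0 < lam" and Hu: "0 < H u" and Ju: "J u = ereal (lam * H u)"
    and sub: "\<zeta> \<in> subdiff J u"
  shows "duality_gap p J H u \<zeta> = 0 \<longleftrightarrow> \<zeta> \<in> subdiff (\<lambda>v. ereal (lam * H v)) u"
proof -
  define A where "A = blinfun_apply \<zeta> u - lam * H u"
  define K where "K = fconj (\<lambda>v. ereal (lam * H v)) \<zeta>"
  define s where "s = lam powr (1 / (p - 1))"
  have ray: "rayleigh J H u = lam"
    using Hu by (simp add: rayleigh_def Ju)
  have J_conj: "fconj J \<zeta> = ereal A"
    using sub subdiff_iff_fconj_eq[where f = J, OF Ju] by (simp add: A_def)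
  have "0 < s" and "s powr (p - 1) = lam"
    using p lam by (simp_all add: s_def powr_powr)
  then have H_conj: "fconj (\<lambda>v. ereal (H v)) \<zeta> = ereal s * K"
    using fconj_homogeneous_rescale[OF H_hom] by (simp add: K_def)
  have "ereal A \<le> K"
    using fenchel_young[of \<zeta> u "\<lambda>v. ereal (lam * H v)"] by (simp add: K_def A_def)
  then have gap_iff: "duality_gap p J H u \<zeta> = 0 \<longleftrightarrow> 0 < A \<and> K = ereal A"
    unfolding duality_gap_def dual_rayleigh_def ray J_conj H_conj s_def real_of_ereal.simps
    by (rule gap_formula_eq_zero_iff[OF p lam])
  have K_iff: "K = ereal A \<longleftrightarrow> \<zeta> \<in> subdiff (\<lambda>v. ereal (lam * H v)) u"
    using subdiff_iff_fconj_eq[where f = "\<lambda>v. ereal (lam * H v)" and a = "lam * H u"]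
    by (simp add: K_def A_def)
  have "0 < A" if "\<zeta> \<in> subdiff (\<lambda>v. ereal (lam * H v)) u"
  proof -
    have "\<forall>t v. lam * H (t *\<^sub>R v) = \<bar>t\<bar> powr p * (lam * H v)"
      using H_hom by simp
    from subdiff_homogeneous_Euler[OF p this that]
    have "A = (p - 1) * (lam * H u)"
      by (simp add: A_def algebra_simps)
    then show ?thesis
      using p lam Hu by simp
  qed
  with gap_iff K_iff show ?thesis
    by blast
qed

theorem proposition2p7:
  fixes J :: "'a::banach \<Rightarrow> ereal" and H :: "'a \<Rightarrow> real" and p c :: real
    and u :: 'a and \<zeta> :: "'a \<Rightarrow>\<^sub>L real"
  assumes refl: "reflexive_space TYPE('a)"
    and p: "1 < p"
    and J: "Gamma0 J"
    and H: "Gamma0 (\<lambda>v. ereal (H v))"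
    and H_nonneg: "\<forall>v. 0 \<le> H v"
    and H_hom: "\<forall>t v. H (t *\<^sub>R v) = \<bar>t\<bar> powr p * H v"
    and H_norm: "is_norm_fun (\<lambda>v. (p * H v) powr (1 / p))"
    and growth: "0 < c" "\<forall>v. ereal (H v) \<le> ereal c * J v"
    and u: "u \<noteq> 0" and \<zeta>: "\<zeta> \<noteq> 0" and sub: "\<zeta> \<in> subdiff J u"
  shows "duality_gap p J H u \<zeta> = 0 \<longleftrightarrow> p_eigenvector J H u \<zeta> (rayleigh J H u)"
proof -
  obtain Ju where Ju: "J u = ereal Ju"
    using subdiff_imp_finite J sub unfolding Gamma0_def by blast
  have Hu: "0 < H u"
    using norm_fun_powr_pos[OF H_norm H_nonneg u] .
  have "H u \<le> c * Ju"
    using growth(2)[rule_format, of u] by (simp add: Ju)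
  with Hu have "0 < c * Ju"
    by linarith
  with growth(1) have "0 < Ju"
    by (simp add: zero_less_mult_iff)
  define lam where "lam = Ju / H u"
  have lam: "0 < lam" and ray: "rayleigh J H u = lam" and Ju_lam: "J u = ereal (lam * H u)"
    using Hu \<open>0 < Ju\<close> by (simp_all add: lam_def rayleigh_def Ju)
  show ?thesis
    unfolding duality_gap_eq_zero_iff_subdiff[OF p H_hom lam Hu Ju_lam sub] p_eigenvector_def ray
      subdiff_scaleR[OF lam, symmetric]
    using u sub by simp
qed

end
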